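(* Let $d\geq 1$. The moduli orders $r_{PP}$, $r_{PN}$, $r_{NP}$, $r_{NN}$ of length $d$ are rigid. More precisely, let $Q$ be a hyperbolic polynomial of degree $d$ with positive leading coefficient, all coefficients nonzero and roots of pairwise distinct moduli. - If $Q$ defines $r_{PN}$ (when $d$ is even) or $r_{NN}$ (when $d$ is odd), then $Q$ defines the sign pattern $\Sigma_+$ of length $d+1$. - If $Q$ defines $r_{NP}$ (when $d$ is even) or $r_{PP}$ (when $d$ is odd), then $Q$ defines the sign pattern $\Sigma_-$ of length $d+1$.
   Context: A hyperbolic polynomial (HP) is a real univariate polynomial all of whose roots are real. The sign pattern (SP) defined by a polynomial $a_dx^d+\dots+a_0$ with $a_d>0$ and all $a_j\neq0$ is $(\mathrm{sgn}(a_d),\mathrm{sgn}(a_{d-1}),\dots,\mathrm{sgn}(a_0))$. A moduli order (MO) of length $d$ is a string of $d$ letters $P$/$N$ separated by $<$. A HP defines the MO obtained by listing the moduli of its roots in increasing order, writing $P$ for a positive root and $N$ for a negative root. A MO is rigid if all HPs (with positive leading coefficient, nonzero coefficients, roots of distinct moduli) defining it define the same SP. The alternating MOs are: $r_{PN}: P<N<P<N<\dots<N$; $r_{PP}: P<N<\dots<P$; $r_{NP}: N<P<\dots<P$; $r_{NN}: N<P<\dots<N$. In each, letters alternate, and the first and last letters are given by the subscripts. The sign pattern $\Sigma_+$ of length $d+1$ is $(+,+,-,-,+,+,-,-,\dots)$. Its entry in position $k$ (for $k=0,\dots,d$, i.e. the sign of the coefficient of $x^{d-k}$) is $+$ if $k\equiv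 0,1 \pmod 4$ and $-$ if $k\equiv 2,3\pmod 4$. The sign pattern $\Sigma_-$ of length $d+1$ is $(+,-,-,+,+,-,-,+,\dots)$. Its entry in position $k$ is $+$ if $k\equiv 0,3\pmod 4$ and $-$ if $k\equiv 1,2\pmod 4$. *)

theory Defs
  imports "HOL-Computational_Algebra.Polynomial"
begin

definition hyperbolic :: "real poly \<Rightarrow> bool" where
  "hyperbolic p \<longleftrightarrow> (\<forall>z::complex. poly (map_poly of_real p) z = 0 \<longrightarrow> z \<in> \<real>)"

definition all_coeffs_nonzero :: "real poly \<Rightarrow> bool" where
  "all_coeffs_nonzero p \<longleftrightarrow> (\<forall>i\<le>degree p. coeff p i \<noteq> 0)"

text \<open>Roots (counted with multiplicity) have pairwise distinct moduli:
  every root is simple, and distinct roots have distinct absolute values.\<close>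
definition distinct_moduli_roots :: "real poly \<Rightarrow> bool" where
  "distinct_moduli_roots p \<longleftrightarrow> p \<noteq> 0 \<and>
     (\<forall>x. poly p x = 0 \<longrightarrow> order x p = 1) \<and>
     (\<forall>x y. poly p x = 0 \<longrightarrow> poly p y = 0 \<longrightarrow> x \<noteq> y \<longrightarrow> \<bar>x\<bar> \<noteq> \<bar>y\<bar>)"

text \<open>Moduli order as a list of letters: True = P (positive root), False = N (negative root),
  listed by increasing modulus of the (real) roots.\<close>
definition moduli_order :: "real poly \<Rightarrow> bool list" where
  "moduli_order p = map (\<lambda>x. x > 0) (sort_key abs (sorted_list_of_set {x. poly p x = 0}))"

definition alt_MO :: "bool \<Rightarrow> nat \<Rightarrow> bool list" where
  "alt_MO first d = map (\<lambda>i. if even i then first else \<not> first) [0..<d]"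

definition r_PN :: "nat \<Rightarrow> bool list" where "r_PN d = alt_MO True d"
definition r_PP :: "nat \<Rightarrow> bool list" where "r_PP d = alt_MO True d"
definition r_NP :: "nat \<Rightarrow> bool list" where "r_NP d = alt_MO False d"
definition r_NN :: "nat \<Rightarrow> bool list" where "r_NN d = alt_MO False d"

definition sign_pattern :: "real poly \<Rightarrow> real list" where
  "sign_pattern p = map (\<lambda>k. sgn (coeff p (degree p - k))) [0..<degree p + 1]"

definition Sigma_plus :: "nat \<Rightarrow> real list" where
  "Sigma_plus d = map (\<lambda>k. if k mod 4 = 0 \<or> k mod 4 = 1 then 1 else -1) [0..<d + 1]"

definition Sigma_minus :: "nat \<Rightarrow> real list" where
  "Sigma_minus d = map (\<lambda>k. if k mod 4 = 0 \<or> k mod 4 = 3 then 1 else -1) [0..<d + 1]"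

end

theory Submission
  imports Defs
begin

(* Order the roots t_1, ..., t_d by increasing modulus. The coefficient of x^(d-k) in Q is
   lead_coeff Q times the k-th coefficient c_k of the reversed polynomial prod (1 - t_i x).
   Let e be the sign and A the modulus of the largest root used so far, and weight c_k by
   (-e)^k (-1)^(k choose 2). Then all weighted coefficients are positive and every odd-indexed
   one is at most A times its predecessor. A new root of opposite sign and modulus A' > A
   multiplies by 1 + e A' x and flips e; the new weighted coefficients are A' c_j - c_(j+1) for
   even j and A' c_j + c_(j+1) for odd j, so the domination c_(j+1) <= A c_j < A' c_j preserves
   both properties. For e = -1 and e = 1 the weights are exactly Sigma_plus and Sigma_minus. *)

lemma linear_factors_dvd:
  fixes p :: "'a::idom poly"
  assumes "finite A" and "\<And>a. a \<in> A \<Longrightarrow> poly p a = 0"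
  shows "(\<Prod>a\<in>A. [:-a, 1:]) dvd p"
  using assms
proof (induction A arbitrary: p rule: finite_induct)
  case (insert a A)
  obtain q where q: "p = [:-a, 1:] * q"
    using insert.prems by (meson dvdE insertI1 poly_eq_0_iff_dvd)
  have "poly q b = 0" if "b \<in> A" for b
  proof -
    have "poly p b = 0" "b \<noteq> a" using insert.prems insert.hyps that by auto
    then show ?thesis using q by simp
  qed
  then have "(\<Prod>a\<in>A. [:-a, 1:]) dvd q" by (rule insert.IH)
  then show ?case
    unfolding prod.insert[OF insert.hyps] q by (rule mult_dvd_mono[OF dvd_refl])
qed simp

lemma eq_smult_linear_factors:
  fixes p :: "'a::idom poly"
  assumes "finite A" and "\<And>a. a \<in> A \<Longrightarrow> poly p a = 0" and "card A = degree p"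
  shows "p = smult (lead_coeff p) (\<Prod>a\<in>A. [:-a, 1:])"
proof (cases "p = 0")
  case False
  define F where "F = (\<Prod>a\<in>A. [:-a, 1:])"
  have "F dvd p" unfolding F_def using assms(1,2) by (rule linear_factors_dvd)
  then obtain r where r: "p = F * r" ..
  have "F \<noteq> 0" "r \<noteq> 0" using False r by auto
  then have "degree p = degree F + degree r" unfolding r by (rule degree_mult_eq)
  then have "degree r = 0" using assms(3) by (simp add: F_def degree_prod_eq_sum_degree)
  moreover have "lead_coeff p = lead_coeff r"
    unfolding r lead_coeff_mult by (simp add: F_def lead_coeff_prod)
  ultimately have "r = [:lead_coeff p:]" by (auto elim: degree_eq_zeroE)
  then show ?thesis unfolding F_def[symmetric] by (subst r) simp
qed simp

definition sign_weight :: "real \<Rightarrow> nat \<Rightarrow> real" where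
  "sign_weight e k = (-e) ^ k * (-1) ^ (k choose 2)"

lemma sign_weight_0 [simp]: "sign_weight e 0 = 1"
  by (simp add: sign_weight_def numeral_2_eq_2)

lemma sign_weight_uminus_Suc: "sign_weight (-e) (Suc k) = e * sign_weight e k"
  unfolding sign_weight_def by (simp add: numeral_2_eq_2 power_add power_minus')

lemma sign_weight_uminus: "sign_weight (-e) k = (-1) ^ k * sign_weight e k"
  unfolding sign_weight_def by (simp add: power_minus')

lemma sign_weight_minus_one: "sign_weight (-1) k = (if k mod 4 = 0 \<or> k mod 4 = 1 then 1 else -1)"
proof (induction k)
  case (Suc k)
  have "sign_weight (-1) (Suc k) = (-1) ^ k * sign_weight (-1) k"
    using sign_weight_uminus_Suc[of 1 k] sign_weight_uminus[of "-1" k] by simp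
  moreover have "k mod 4 = 0 \<or> k mod 4 = 1 \<or> k mod 4 = 2 \<or> k mod 4 = 3" by presburger
  moreover have "even k \<longleftrightarrow> k mod 4 = 0 \<or> k mod 4 = 2" by presburger
  moreover have "Suc k mod 4 = (if k mod 4 = 3 then 0 else Suc (k mod 4))" by presburger
  ultimately show ?case using Suc.IH by auto
qed simp

lemma sign_weight_one: "sign_weight 1 k = (if k mod 4 = 0 \<or> k mod 4 = 3 then 1 else -1)"
proof -
  have "k mod 4 = 0 \<or> k mod 4 = 1 \<or> k mod 4 = 2 \<or> k mod 4 = 3" by presburger
  moreover have "Suc k mod 4 = (if k mod 4 = 3 then 0 else Suc (k mod 4))" by presburger
  ultimately
  show ?thesis
    using sign_weight_uminus_Suc[of 1 k] sign_weight_minus_one[of "Suc k"] by auto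
qed

lemma Sigma_plus_eq: "Sigma_plus d = map (sign_weight (-1)) [0..<d + 1]"
  by (simp add: Sigma_plus_def sign_weight_minus_one)

lemma Sigma_minus_eq: "Sigma_minus d = map (sign_weight 1) [0..<d + 1]"
  by (simp add: Sigma_minus_def sign_weight_one)

lemma sgn_eq_sign_weight:
  assumes "e \<in> {-1, 1}" and "0 < sign_weight e k * c"
  shows "sgn c = sign_weight e k"
proof -
  have "sign_weight e k \<in> {-1, 1}"
    using assms(1) sign_weight_minus_one[of k] sign_weight_one[of k] by (auto split: if_splits)
  then show ?thesis using assms(2) by (auto simp: sgn_if zero_less_mult_iff)
qed

(* The domination is required for all odd k, also beyond the degree where it is trivial,
   so that multiplying by a linear factor needs no case split at the top coefficient. *)
definition sign_weighted_coeffs :: "real \<Rightarrow> real \<Rightarrow> real poly \<Rightarrow> bool" where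
  "sign_weighted_coeffs e A p \<longleftrightarrow>
     (\<forall>k\<le>degree p. 0 < sign_weight e k * coeff p k) \<and>
     (\<forall>k. odd k \<longrightarrow> sign_weight e k * coeff p k \<le> A * (sign_weight e (k - 1) * coeff p (k - 1)))"

lemma sign_weighted_coeffs_nonneg:
  "sign_weighted_coeffs e A p \<Longrightarrow> 0 \<le> sign_weight e k * coeff p k"
  unfolding sign_weighted_coeffs_def
  by (cases "k \<le> degree p") (auto simp: coeff_eq_0 less_imp_le)

lemma sign_weighted_coeffs_1: "sign_weighted_coeffs e 0 1"
  unfolding sign_weighted_coeffs_def by (auto simp: coeff_1 elim: oddE)

lemma sign_weighted_coeffs_mult_linear:
  assumes inv: "sign_weighted_coeffs e M p" and e: "e \<in> {-1, 1}" and M: "0 \<le> M" "M < A"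
  shows "sign_weighted_coeffs (-e) A (p * [:1, e * A:])"
proof -
  define q where "q = p * [:1, e * A:]"
  define c where "c k = sign_weight e k * coeff p k" for k
  define c' where "c' k = sign_weight (-e) k * coeff q k" for k
  have c_pos: "0 < c k" if "k \<le> degree p" for k
    using inv that by (simp add: sign_weighted_coeffs_def c_def)
  have c_nonneg: "0 \<le> c k" for k
    using sign_weighted_coeffs_nonneg[OF inv] by (simp add: c_def)
  have c_odd: "c k \<le> M * c (k - 1)" if "odd k" for k
    using inv that by (simp add: sign_weighted_coeffs_def c_def)
  have "p \<noteq> 0" using c_pos[of 0] by (auto simp: c_def)
  moreover have "e * A \<noteq> 0" using e M by auto
  ultimately have deg_q: "degree q = Suc (degree p)"
    by (simp add: q_def degree_mult_eq del: mult_pCons_right)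
  have c'_0: "c' 0 = c 0" by (simp add: c'_def c_def q_def)
  have c'_Suc: "c' (Suc j) = A * c j - (-1) ^ j * c (Suc j)" for j
  proof -
    have "c' (Suc j) = sign_weight (-e) (Suc j) * coeff p (Suc j)
        + (e * e) * A * (sign_weight e j * coeff p j)"
      by (simp add: c'_def q_def sign_weight_uminus_Suc algebra_simps)
    also have "\<dots> = A * c j - (-1) ^ j * c (Suc j)"
      using e by (auto simp: c_def sign_weight_uminus)
    finally show ?thesis .
  qed
  have c'_pos: "0 < c' k" if "k \<le> degree q" for k
  proof (cases k)
    case (Suc j)
    then have "0 < c j" using that deg_q c_pos by simp
    moreover have "even j \<Longrightarrow> c (Suc j) < A * c j"
      using c_odd[of "Suc j"] M \<open>0 < c j\<close> by (simp add: mult_strict_right_mono order.strict_trans1)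
    ultimately show ?thesis using Suc c_nonneg[of "Suc j"] M
      by (cases "even j") (auto simp: c'_Suc add_pos_nonneg)
  qed (use c'_0 c_pos in simp)
  have c'_odd: "c' k \<le> A * c' (k - 1)" if "odd k" for k
  proof -
    obtain j where k: "k = Suc j" and "even j" using \<open>odd k\<close> by (cases k) auto
    have "c j \<le> c' j"
    proof (cases j)
      case (Suc i)
      then show ?thesis using \<open>even j\<close> c_nonneg[of i] M by (simp add: c'_Suc)
    qed (simp add: c'_0)
    then have "A * c j \<le> A * c' j" using M by (simp add: mult_left_mono)
    then show ?thesis using k \<open>even j\<close> c_nonneg[of "Suc j"] by (simp add: c'_Suc)
  qed
  show ?thesis
    using c'_pos c'_odd unfolding sign_weighted_coeffs_def c'_def q_def by auto
qed

lemma sign_weighted_coeffs_reversed_roots: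
  fixes ts :: "real list"
  assumes "ts \<noteq> []" and "0 \<notin> set ts"
    and "successively (\<lambda>s t. \<bar>s\<bar> < \<bar>t\<bar>) ts" and "successively (\<lambda>s t. (0 < s) \<noteq> (0 < t)) ts"
  shows "sign_weighted_coeffs (sgn (last ts)) \<bar>last ts\<bar> (\<Prod>x\<leftarrow>ts. [:1, -x:])"
  using assms
proof (induction ts rule: rev_induct)
  case (snoc t ts)
  have "t \<noteq> 0" using snoc.prems(2) by simp
  obtain M where start: "sign_weighted_coeffs (- sgn t) M (\<Prod>x\<leftarrow>ts. [:1, -x:])"
    and M: "0 \<le> M" "M < \<bar>t\<bar>"
  proof (cases "ts = []")
    case True
    then show ?thesis using that[of 0] sign_weighted_coeffs_1 \<open>t \<noteq> 0\<close> by simp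
  next
    case False
    have "0 \<notin> set ts" "successively (\<lambda>s t. \<bar>s\<bar> < \<bar>t\<bar>) ts"
      "successively (\<lambda>s t. (0 < s) \<noteq> (0 < t)) ts" "\<bar>last ts\<bar> < \<bar>t\<bar>" "(0 < last ts) \<noteq> (0 < t)"
      using snoc.prems False by (simp_all add: successively_append_iff)
    moreover have "last ts \<noteq> 0" using False \<open>0 \<notin> set ts\<close> by (metis last_in_set)
    ultimately have "sgn (last ts) = - sgn t"
      and "sign_weighted_coeffs (sgn (last ts)) \<bar>last ts\<bar> (\<Prod>x\<leftarrow>ts. [:1, -x:])"
      using \<open>t \<noteq> 0\<close> snoc.IH[OF False] by (auto simp: sgn_if)
    then show ?thesis using that \<open>\<bar>last ts\<bar> < \<bar>t\<bar>\<close> by simp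
  qed
  have "- sgn t \<in> {-1, 1}" and "- sgn t * \<bar>t\<bar> = - t"
    using \<open>t \<noteq> 0\<close> by (auto simp: sgn_if)
  then show ?case
    using sign_weighted_coeffs_mult_linear[OF start _ M] by simp
qed simp

definition roots_by_modulus :: "real poly \<Rightarrow> real list" where
  "roots_by_modulus p = sort_key abs (sorted_list_of_set {x. poly p x = 0})"

lemma moduli_order_eq: "moduli_order p = map (\<lambda>x. 0 < x) (roots_by_modulus p)"
  by (simp add: moduli_order_def roots_by_modulus_def)

lemma set_roots_by_modulus: "p \<noteq> 0 \<Longrightarrow> set (roots_by_modulus p) = {x. poly p x = 0}"
  by (simp add: roots_by_modulus_def poly_roots_finite)

lemma distinct_roots_by_modulus: "distinct (roots_by_modulus p)"
  by (simp add: roots_by_modulus_def)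

lemma successively_abs_roots_by_modulus:
  assumes "distinct_moduli_roots p"
  shows "successively (\<lambda>s t. \<bar>s\<bar> < \<bar>t\<bar>) (roots_by_modulus p)"
  unfolding successively_conv_nth
proof (intro allI impI)
  fix i
  define L where "L = roots_by_modulus p"
  assume i: "Suc i < length L"
  have "sorted (map abs L)" by (simp add: L_def roots_by_modulus_def)
  then have "\<bar>L ! i\<bar> \<le> \<bar>L ! Suc i\<bar>" using i by (auto simp: sorted_iff_nth_mono)
  moreover have "L ! i \<noteq> L ! Suc i"
    using i distinct_roots_by_modulus[of p] by (simp add: L_def nth_eq_iff_index_eq)
  moreover have "p \<noteq> 0" using assms by (simp add: distinct_moduli_roots_def)
  then have "poly p (L ! i) = 0" "poly p (L ! Suc i) = 0"
    using i set_roots_by_modulus[of p] nth_mem[of i L] nth_mem[of "Suc i" L] by (auto simp: L_def)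
  ultimately show "\<bar>L ! i\<bar> < \<bar>L ! Suc i\<bar>"
    using assms unfolding distinct_moduli_roots_def by (metis order_le_less)
qed

lemma successively_alt_MO: "successively (\<noteq>) (alt_MO b d)"
  by (auto simp: alt_MO_def successively_conv_nth)

lemma last_alt_MO: "0 < d \<Longrightarrow> last (alt_MO b d) = (b \<longleftrightarrow> odd d)"
  by (cases d) (auto simp: alt_MO_def)

lemma sign_pattern_alternating_moduli_order:
  assumes lead: "0 < lead_coeff Q" and nonzero: "all_coeffs_nonzero Q"
    and distinct: "distinct_moduli_roots Q"
    and len: "length (moduli_order Q) = degree Q" and "moduli_order Q \<noteq> []"
    and alternating: "successively (\<noteq>) (moduli_order Q)"
  shows "sign_pattern Q = map (sign_weight (if last (moduli_order Q) then 1 else -1)) [0..<degree Q + 1]"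
proof -
  define L where "L = roots_by_modulus Q"
  define P where "P = (\<Prod>t\<leftarrow>L. [:1, -t:])"
  define e where "e = sgn (last L)"
  have "Q \<noteq> 0" using distinct by (simp add: distinct_moduli_roots_def)
  then have roots: "set L = {x. poly Q x = 0}" by (simp add: L_def set_roots_by_modulus)
  have "coeff Q 0 \<noteq> 0" using nonzero by (simp add: all_coeffs_nonzero_def)
  then have "0 \<notin> set L" using roots by (simp add: poly_0_coeff_0)
  have "L \<noteq> []" using \<open>moduli_order Q \<noteq> []\<close> by (simp add: L_def moduli_order_eq)
  have "distinct L" by (simp add: L_def distinct_roots_by_modulus)
  have "card (set L) = degree Q"
    using len \<open>distinct L\<close> by (simp add: L_def moduli_order_eq distinct_card)
  then have "Q = smult (lead_coeff Q) (\<Prod>a\<in>set L. [:-a, 1:])"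
    by (rule eq_smult_linear_factors[rotated 2]) (use roots poly_roots_finite[OF \<open>Q \<noteq> 0\<close>] in auto)
  also have "(\<Prod>a\<in>set L. [:-a, 1:]) = (\<Prod>t\<leftarrow>L. [:-t, 1:])"
    using \<open>distinct L\<close> by (rule prod.distinct_set_conv_list)
  finally have "reflect_poly Q = smult (lead_coeff Q) (reflect_poly (\<Prod>t\<leftarrow>L. [:-t, 1:]))"
    by (metis reflect_poly_smult)
  also have "reflect_poly (\<Prod>t\<leftarrow>L. [:-t, 1:]) = P"
    using \<open>0 \<notin> set L\<close> unfolding P_def reflect_poly_prod_list map_map
    by (intro arg_cong[where f = prod_list] map_cong) (auto simp: reflect_poly_def)
  finally have reflect: "reflect_poly Q = smult (lead_coeff Q) P" .
  have coeff_Q: "coeff Q (degree Q - k) = lead_coeff Q * coeff P k" if "k \<le> degree Q" for k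
    using that arg_cong[OF reflect, of "\<lambda>p. coeff p k"] by (simp add: coeff_reflect_poly)
  have "degree P = degree Q"
    using arg_cong[OF reflect, of degree] \<open>coeff Q 0 \<noteq> 0\<close> \<open>Q \<noteq> 0\<close> by simp
  moreover have "sign_weighted_coeffs e \<bar>last L\<bar> P"
    using sign_weighted_coeffs_reversed_roots[OF \<open>L \<noteq> []\<close> \<open>0 \<notin> set L\<close>]
      successively_abs_roots_by_modulus[OF distinct] alternating
    by (simp add: e_def P_def L_def moduli_order_eq successively_map)
  ultimately have weighted: "0 < sign_weight e k * coeff P k" if "k \<le> degree Q" for k
    using that by (simp add: sign_weighted_coeffs_def)
  have "last L \<noteq> 0" using \<open>L \<noteq> []\<close> \<open>0 \<notin> set L\<close> by (metis last_in_set)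
  then have e: "e = (if last (moduli_order Q) then 1 else -1)"
    using \<open>L \<noteq> []\<close> by (auto simp: e_def L_def moduli_order_eq last_map sgn_if)
  have "sgn (coeff Q (degree Q - k)) = sign_weight e k" if "k \<le> degree Q" for k
    using coeff_Q[OF that] sgn_eq_sign_weight[OF _ weighted[OF that]] lead e
    by (simp add: sgn_mult)
  then show ?thesis
    unfolding sign_pattern_def e[symmetric] by (intro map_cong) auto
qed

theorem theorem1p6:
  fixes Q :: "real poly" and d :: nat
  assumes "d \<ge> 1"
    and "degree Q = d"
    and "lead_coeff Q > 0"
    and "all_coeffs_nonzero Q"
    and "hyperbolic Q"
    and "distinct_moduli_roots Q"
  shows "((even d \<and> moduli_order Q = r_PN d) \<or> (odd d \<and> moduli_order Q = r_NN d)
            \<longrightarrow> sign_pattern Q = Sigma_plus d)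
       \<and> ((even d \<and> moduli_order Q = r_NP d) \<or> (odd d \<and> moduli_order Q = r_PP d)
            \<longrightarrow> sign_pattern Q = Sigma_minus d)"
proof -
  have "sign_pattern Q = map (sign_weight (if b \<longleftrightarrow> odd d then 1 else -1)) [0..<d + 1]"
    if "moduli_order Q = alt_MO b d" for b
  proof -
    have "length (alt_MO b d) = d" "alt_MO b d \<noteq> []" using assms(1) by (auto simp: alt_MO_def)
    then have "sign_pattern Q = map (sign_weight (if last (alt_MO b d) then 1 else -1)) [0..<d + 1]"
      using sign_pattern_alternating_moduli_order[OF assms(3,4,6)] successively_alt_MO[of b d]
        that assms(2) by simp
    then show ?thesis using last_alt_MO assms(1) by simp
  qed
  then show ?thesis
    unfolding r_PN_def r_NN_def r_NP_def r_PP_def Sigma_plus_eq Sigma_minus_eq by auto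
qed

end
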